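(* Let $D$ be a link diagram and $\mathcal{R}$ a set of regions of $D$. If the cardinality of $\mathcal{R}$ is even, then region freeze crossing changes about $\mathcal{R}$ and region crossing changes about $\mathcal{R}$ have the same effect on $D$ (produce the same diagram). If the cardinality of $\mathcal{R}$ is odd, then the diagram obtained from $D$ by region freeze crossing changes about $\mathcal{R}$ is the mirror image of the diagram obtained from $D$ by region crossing changes about $\mathcal{R}$.
   Context: A link diagram is a regular projection of a link into the plane with over/under information at each crossing. Regions are the connected components of the complement of the projection in the plane; a crossing touches a region $R$ if it lies on the boundary of $R$. A region crossing change at $R$ changes every crossing touching $R$ (each once). A region freeze crossing change at $R$ changes every crossing of the diagram that does not touch $R$, and leaves the crossings touching $R$ unchanged. For a set $\mathcal{R}$ of mutually distinct regions, region (freeze) crossing changes about $\mathcal{R}$ means applying the region (freeze) crossing change at each region of $\mathcal{R}$ once, in any order. The mirror image of a diagram here means the diagram with the same projection and every crossing changed. *)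

theory Defs
  imports Main
begin

text \<open>Combinatorial model of a link diagram: a set of crossings, a set of regions,
 the incidence relation "crossing c touches region R" (c lies on the boundary of R),
 and the over/under information at each crossing, encoded as a boolean per crossing.\<close>

record ('c, 'r) diagram =
  crossings :: "'c set"
  regions   :: "'r set"
  touches   :: "'c \<Rightarrow> 'r \<Rightarrow> bool"
  over      :: "'c \<Rightarrow> bool"

definition change_crossings :: "('c \<Rightarrow> bool) \<Rightarrow> ('c, 'r) diagram \<Rightarrow> ('c, 'r) diagram" where
  "change_crossings P D =
     D\<lparr>over := (\<lambda>c. if c \<in> crossings D \<and> P c then \<not> over D c else over D c)\<rparr>"

definition region_cc :: "'r \<Rightarrow> ('c, 'r) diagram \<Rightarrow> ('c, 'r) diagram" where
  "region_cc R D = change_crossings (\<lambda>c. touches D c R) D"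

definition region_freeze_cc :: "'r \<Rightarrow> ('c, 'r) diagram \<Rightarrow> ('c, 'r) diagram" where
  "region_freeze_cc R D = change_crossings (\<lambda>c. \<not> touches D c R) D"

definition mirror :: "('c, 'r) diagram \<Rightarrow> ('c, 'r) diagram" where
  "mirror D = change_crossings (\<lambda>c. True) D"

text \<open>Applying the operation at each region of a list of regions, in the list's order
 (first element applied first).  A set of regions in a given order is a distinct list.\<close>
definition region_cc_seq :: "'r list \<Rightarrow> ('c, 'r) diagram \<Rightarrow> ('c, 'r) diagram" where
  "region_cc_seq Rs D = fold region_cc Rs D"

definition region_freeze_cc_seq :: "'r list \<Rightarrow> ('c, 'r) diagram \<Rightarrow> ('c, 'r) diagram" where
  "region_freeze_cc_seq Rs D = fold region_freeze_cc Rs D"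

end

theory Submission
  imports Defs
begin

text \<open>A crossing changed an even number of times is unchanged.  A region crossing change
  sequence changes c once per region of \<open>\<R>\<close> touching c, the freeze sequence once per region
  not touching c; the two counts add up to \<open>|\<R>|\<close>, so their parities agree exactly when
  \<open>|\<R>|\<close> is even.\<close>

lemma crossings_change_crossings [simp]: "crossings (change_crossings P D) = crossings D"
  and touches_change_crossings [simp]: "touches (change_crossings P D) = touches D"
  by (simp_all add: change_crossings_def)

lemma change_crossings_change_crossings:
  "change_crossings Q (change_crossings P D) = change_crossings (\<lambda>c. P c \<noteq> Q c) D"
  by (auto simp add: change_crossings_def fun_eq_iff)

lemma change_crossings_False [simp]: "change_crossings (\<lambda>c. False) D = D"
  by (simp add: change_crossings_def)

lemma mirror_change_crossings:
  "mirror (change_crossings P D) = change_crossings (\<lambda>c. \<not> P c) D"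
  unfolding mirror_def change_crossings_change_crossings by simp

lemma fold_change_crossings:
  assumes "\<And>R D. f R D = change_crossings (\<lambda>c. P (touches D) c R) D"
  shows "fold f Rs D = change_crossings (\<lambda>c. odd (length (filter (P (touches D) c) Rs))) D"
proof (induction Rs arbitrary: D)
  case Nil
  then show ?case by simp
next
  case (Cons R Rs)
  have "fold f (R # Rs) D = fold f Rs (f R D)"
    by simp
  also have "\<dots> = change_crossings (\<lambda>c. odd (length (filter (P (touches D) c) Rs)))
                    (change_crossings (\<lambda>c. P (touches D) c R) D)"
    by (simp add: Cons.IH assms)
  also have "\<dots> = change_crossings (\<lambda>c. odd (length (filter (P (touches D) c) (R # Rs)))) D"
    by (simp add: change_crossings_change_crossings) (metis (no_types))
  finally show ?case .
qed

lemma region_cc_seq_eq: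
  "region_cc_seq Rs D = change_crossings (\<lambda>c. odd (length (filter (touches D c) Rs))) D"
  unfolding region_cc_seq_def
  by (rule fold_change_crossings[where P = "\<lambda>t. t"]) (simp add: region_cc_def)

lemma region_freeze_cc_seq_eq:
  "region_freeze_cc_seq Rs D =
     change_crossings (\<lambda>c. odd (length (filter (\<lambda>R. \<not> touches D c R) Rs))) D"
  unfolding region_freeze_cc_seq_def
  by (rule fold_change_crossings[where P = "\<lambda>t c R. \<not> t c R"]) (simp add: region_freeze_cc_def)

lemma length_filter_distinct: "distinct xs \<Longrightarrow> length (filter P xs) = card {x \<in> set xs. P x}"
  using distinct_card[of "filter P xs"] by simp

lemma odd_length_filter_not:
  "odd (length (filter (\<lambda>x. \<not> P x) xs)) \<longleftrightarrow> odd (length xs) \<noteq> odd (length (filter P xs))"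
proof -
  have "length (filter P xs) + length (filter (\<lambda>x. \<not> P x) xs) = length xs"
    by (rule sum_length_filter_compl)
  then show ?thesis
    by (metis even_add)
qed

theorem lemma3p1:
  fixes D :: "('c, 'r) diagram" and Rs Rs' :: "'r list"
  assumes "distinct Rs" and "distinct Rs'" and "set Rs' = set Rs"
    and "set Rs \<subseteq> regions D"
  shows "(even (card (set Rs)) \<longrightarrow> region_freeze_cc_seq Rs D = region_cc_seq Rs' D)
       \<and> (odd (card (set Rs)) \<longrightarrow> region_freeze_cc_seq Rs D = mirror (region_cc_seq Rs' D))"
proof -
  have same_count: "length (filter (touches D c) Rs') = length (filter (touches D c) Rs)" for c
    using assms(1-3) by (simp add: length_filter_distinct)
  have "length Rs = card (set Rs)"
    using assms(1) by (simp add: distinct_card)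
  then have freeze: "region_freeze_cc_seq Rs D = change_crossings
      (\<lambda>c. odd (card (set Rs)) \<noteq> odd (length (filter (touches D c) Rs'))) D"
    by (simp add: region_freeze_cc_seq_eq odd_length_filter_not same_count)
  show ?thesis
    unfolding freeze region_cc_seq_eq mirror_change_crossings by auto
qed

end
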